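(* Let $N$ be an orchard network on $X\subseteq[n]$ and let $u,v\in V_T(N)$. If $\mu(u)=\mu(v)$, then $u=v$. Consequently, the extended $\mu$-representation $\boldsymbol\mu(N)$ of an orchard network has no repeated elements, i.e. it is a set.
   Context: A (binary) phylogenetic network on a finite set $X\subseteq[n]=\{1,\dots,n\}$ is a directed acyclic graph $N=(V,A)$ without parallel arcs in which every node is exactly one of: the root (indegree 0, outdegree 1; there is exactly one), a leaf (indegree 1, outdegree 0), a tree node (indegree 1, outdegree 2), or a reticulation (indegree 2, outdegree 1); the leaves are identified with the elements of $X$. $V_T(N)$ denotes the set of leaves and tree nodes, $V_H(N)$ the set of reticulations. $m(u,v)$ is the number of directed paths from $u$ to $v$ (trivial paths allowed). Extended $\mu$-vectors: $\mu_i(u)=m(u,i)$ for $i\in[n]$ (0 if $i\notin X$), $\mu_0(u)=\sum_{h\in V_H(N)} m(u,h)$, $\mu(u)=(\mu_0(u),\dots,\mu_n(u))$; $\boldsymbol\mu(N)$ is the multiset $\{\mu(u)\mid u\in V_T(N)\}$. For distinct leaves $i,j$ with parents $p_i,p_j$: $(i,j)$ is a cherry of $N$ if $p_i=p_j$; a reticulated-cherry of $N$ if $p_i$ is a reticulation, $p_j$ is a tree node and $p_j$ is a parent of $p_i$; reducible if either. Suppressing a node with indegree 1 and outdegree 1 means deleting it and its two arcs and adding an arc from its parent to its child. The reduction $N^{(i,j)}$: if $(i,j)$ is a cherry, delete leaf $i$ and its incoming arc, then suppress $p_i$; if a reticulated-cherry, delete the arc $p_jp_i$ and suppress $p_i$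 and $p_j$. A sequence $S=s_1\cdots s_k$ of pairs is reducible in $N$ if $s_1$ is reducible in $N$ and each $s_t$ is reducible in the network obtained from $N$ by successively reducing $s_1,\dots,s_{t-1}$; $N^S$ denotes the final network; $S$ is complete if $N^S$ is the network $I_x$ consisting of a root joined by an arc to a single leaf $x$. $N$ is an orchard network if it has a complete reducible sequence. *)

theory Defs
  imports Main "HOL-Library.Multiset"
begin

text \<open>A network is a pair (V, A) of a node set and an arc set; nodes are natural
numbers and the leaves are exactly the nodes in the leaf set X (a subset of {1..n}).
Arc sets are sets, so there are no parallel arcs.\<close>

type_synonym net = "nat set \<times> (nat \<times> nat) set"

definition indeg :: "(nat \<times> nat) set \<Rightarrow> nat \<Rightarrow> nat" where
  "indeg A v = card {u. (u, v) \<in> A}"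

definition outdeg :: "(nat \<times> nat) set \<Rightarrow> nat \<Rightarrow> nat" where
  "outdeg A v = card {w. (v, w) \<in> A}"

definition is_root :: "(nat \<times> nat) set \<Rightarrow> nat \<Rightarrow> bool" where
  "is_root A v \<longleftrightarrow> indeg A v = 0 \<and> outdeg A v = 1"

definition is_leaf :: "(nat \<times> nat) set \<Rightarrow> nat \<Rightarrow> bool" where
  "is_leaf A v \<longleftrightarrow> indeg A v = 1 \<and> outdeg A v = 0"

definition is_tree_node :: "(nat \<times> nat) set \<Rightarrow> nat \<Rightarrow> bool" where
  "is_tree_node A v \<longleftrightarrow> indeg A v = 1 \<and> outdeg A v = 2"

definition is_ret :: "(nat \<times> nat) set \<Rightarrow> nat \<Rightarrow> bool" where
  "is_ret A v \<longleftrightarrow> indeg A v = 2 \<and> outdeg A v = 1"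

definition phylo_net :: "nat \<Rightarrow> nat set \<Rightarrow> net \<Rightarrow> bool" where
  "phylo_net n X N \<longleftrightarrow> (let V = fst N; A = snd N in
      finite V \<and> A \<subseteq> V \<times> V \<and> acyclic A \<and>
      (\<forall>v\<in>V. is_root A v \<or> is_leaf A v \<or> is_tree_node A v \<or> is_ret A v) \<and>
      (\<exists>!r. r \<in> V \<and> is_root A r) \<and>
      {v\<in>V. is_leaf A v} = X \<and> X \<subseteq> {1..n})"

definition V_T :: "net \<Rightarrow> nat set" where
  "V_T N = {v \<in> fst N. is_leaf (snd N) v \<or> is_tree_node (snd N) v}"

definition V_H :: "net \<Rightarrow> nat set" where
  "V_H N = {v \<in> fst N. is_ret (snd N) v}"

definition is_path :: "(nat \<times> nat) set \<Rightarrow> nat \<Rightarrow> nat \<Rightarrow> nat list \<Rightarrow> bool" where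
  "is_path A u v p \<longleftrightarrow> p \<noteq> [] \<and> hd p = u \<and> last p = v \<and> distinct p \<and>
     (\<forall>k. Suc k < length p \<longrightarrow> (p ! k, p ! Suc k) \<in> A)"

definition npaths :: "(nat \<times> nat) set \<Rightarrow> nat \<Rightarrow> nat \<Rightarrow> nat" where
  "npaths A u v = card {p. is_path A u v p}"

definition mu :: "nat \<Rightarrow> nat set \<Rightarrow> net \<Rightarrow> nat \<Rightarrow> nat list" where
  "mu n X N u = map (\<lambda>i. if i = 0 then (\<Sum>h\<in>V_H N. npaths (snd N) u h)
                           else if i \<in> X then npaths (snd N) u i else 0) [0..<Suc n]"

definition mu_rep :: "nat \<Rightarrow> nat set \<Rightarrow> net \<Rightarrow> nat list multiset" where
  "mu_rep n X N = image_mset (mu n X N) (mset_set (V_T N))"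

definition parent :: "(nat \<times> nat) set \<Rightarrow> nat \<Rightarrow> nat" where
  "parent A x = (THE p. (p, x) \<in> A)"

definition child :: "(nat \<times> nat) set \<Rightarrow> nat \<Rightarrow> nat" where
  "child A x = (THE c. (x, c) \<in> A)"

definition is_cherry :: "net \<Rightarrow> nat \<Rightarrow> nat \<Rightarrow> bool" where
  "is_cherry N i j \<longleftrightarrow> i \<noteq> j \<and> i \<in> fst N \<and> j \<in> fst N \<and>
     is_leaf (snd N) i \<and> is_leaf (snd N) j \<and> parent (snd N) i = parent (snd N) j"

definition is_ret_cherry :: "net \<Rightarrow> nat \<Rightarrow> nat \<Rightarrow> bool" where
  "is_ret_cherry N i j \<longleftrightarrow> i \<noteq> j \<and> i \<in> fst N \<and> j \<in> fst N \<and>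
     is_leaf (snd N) i \<and> is_leaf (snd N) j \<and>
     is_ret (snd N) (parent (snd N) i) \<and> is_tree_node (snd N) (parent (snd N) j) \<and>
     (parent (snd N) j, parent (snd N) i) \<in> snd N"

definition reducible :: "net \<Rightarrow> nat \<times> nat \<Rightarrow> bool" where
  "reducible N s \<longleftrightarrow> is_cherry N (fst s) (snd s) \<or> is_ret_cherry N (fst s) (snd s)"

definition suppress :: "net \<Rightarrow> nat \<Rightarrow> net" where
  "suppress N w = (let A = snd N; a = parent A w; b = child A w in
     (fst N - {w}, (A - {(a, w), (w, b)}) \<union> {(a, b)}))"

definition reduce :: "net \<Rightarrow> nat \<times> nat \<Rightarrow> net" where
  "reduce N s = (let i = fst s; j = snd s; A = snd N; pi = parent A i; pj = parent A j in
     if is_cherry N i j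
     then suppress (fst N - {i}, A - {(pi, i)}) pi
     else suppress (suppress (fst N, A - {(pj, pi)}) pi) pj)"

fun reducible_seq :: "net \<Rightarrow> (nat \<times> nat) list \<Rightarrow> bool" where
  "reducible_seq N [] = True"
| "reducible_seq N (s # S) = (reducible N s \<and> reducible_seq (reduce N s) S)"

fun reduce_seq :: "net \<Rightarrow> (nat \<times> nat) list \<Rightarrow> net" where
  "reduce_seq N [] = N"
| "reduce_seq N (s # S) = reduce_seq (reduce N s) S"

definition is_I :: "net \<Rightarrow> bool" where
  "is_I N \<longleftrightarrow> (\<exists>r x. r \<noteq> x \<and> N = ({r, x}, {(r, x)}))"

definition orchard :: "nat \<Rightarrow> nat set \<Rightarrow> net \<Rightarrow> bool" where
  "orchard n X N \<longleftrightarrow> phylo_net n X N \<and>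
     (\<exists>S. reducible_seq N S \<and> is_I (reduce_seq N S))"

end

(*
  Induction along a complete reducible sequence. Each reduction deletes one arc uv, which destroys
  exactly m(x,u) m(v,y) of the x-y paths, and suppresses nodes of in- and outdegree 1, which keeps
  all path counts between the remaining nodes. So the mu-vectors of the surviving nodes change in a
  controlled way: for a cherry (i,j) only the coordinate of i is lost; for a reticulated cherry
  (i,j) with parents r and t, a node x loses m(x,t) paths to i and m(x,r) paths to reticulations.
  Two nodes with equal mu-vectors therefore keep equal mu-vectors in the reduced network, and
  coincide by induction, except near the cherry; there the coordinates at i and j separate the
  nodes, and a node with the mu-vector of the tree node parent (p, resp. t) would have the
  mu-vector of the leaf j after the reduction.
*)

theory Submission
  imports Defs
begin

section \<open>Paths and path counts\<close>

definition preds :: "(nat \<times> nat) set \<Rightarrow> nat \<Rightarrow> nat set" where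
  "preds A v = {u. (u, v) \<in> A}"

definition succs :: "(nat \<times> nat) set \<Rightarrow> nat \<Rightarrow> nat set" where
  "succs A v = {w. (v, w) \<in> A}"

lemma preds_converse [simp]: "preds (A\<inverse>) v = succs A v"
  by (simp add: preds_def succs_def)

lemma indeg_eq_card_preds: "indeg A v = card (preds A v)"
  by (simp add: indeg_def preds_def)

lemma outdeg_eq_card_succs: "outdeg A v = card (succs A v)"
  by (simp add: outdeg_def succs_def)

lemma finite_preds: "finite A \<Longrightarrow> finite (preds A v)"
  by (rule finite_subset[of _ "fst ` A"]) (force simp: preds_def)+

lemma finite_succs: "finite A \<Longrightarrow> finite (succs A v)"
  by (rule finite_subset[of _ "snd ` A"]) (force simp: succs_def)+

lemma parent_eq: "preds A v = {u} \<Longrightarrow> parent A v = u"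
  unfolding parent_def preds_def by (metis mem_Collect_eq singletonD singletonI the_equality)

lemma child_eq: "succs A v = {w} \<Longrightarrow> child A v = w"
  unfolding child_def succs_def by (metis mem_Collect_eq singletonD singletonI the_equality)

lemma is_path_self_iff: "is_path A x x P \<longleftrightarrow> P = [x]"
proof
  assume path: "is_path A x x P"
  then have "P ! 0 = P ! (length P - 1)" "distinct P" "P \<noteq> []"
    by (auto simp: is_path_def hd_conv_nth last_conv_nth)
  then have "length P = 1"
    using nth_eq_iff_index_eq[of P 0 "length P - 1"] by (cases P) auto
  with path show "P = [x]"
    by (cases P) (auto simp: is_path_def)
qed (simp add: is_path_def)

lemma npaths_self [simp]: "npaths A x x = 1"
  by (simp add: npaths_def is_path_self_iff)

lemma is_path_nth_rtrancl:
  assumes "is_path A x y P" "k \<le> l" "l < length P"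
  shows "(P ! k, P ! l) \<in> A\<^sup>*"
  using assms(2,3)
proof (induction l)
  case (Suc l)
  with assms(1) show ?case
    by (cases "k = Suc l") (auto simp: is_path_def intro: rtrancl_into_rtrancl)
qed simp

lemma is_path_rtrancl:
  assumes "is_path A x y P" "z \<in> set P"
  shows "(z, y) \<in> A\<^sup>*"
proof -
  obtain k where "k < length P" "P ! k = z"
    using assms(2) by (meson in_set_conv_nth)
  moreover have "y = P ! (length P - 1)"
    using assms(1) by (auto simp: is_path_def last_conv_nth)
  ultimately show ?thesis
    using is_path_nth_rtrancl[OF assms(1), of k "length P - 1"] by auto
qed

lemma rtrancl_if_npaths_pos:
  assumes "0 < npaths A x y"
  shows "(x, y) \<in> A\<^sup>*"
proof -
  have "{P. is_path A x y P} \<noteq> {}"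
    using assms by (metis card.empty less_irrefl npaths_def)
  then obtain P where "is_path A x y P"
    by blast
  then show ?thesis
    using is_path_rtrancl[of A x y P x] by (auto simp: is_path_def)
qed

lemma is_path_converse: "is_path (A\<inverse>) y x (rev P) \<longleftrightarrow> is_path A x y P"
proof -
  have "(\<forall>k. Suc k < length P \<longrightarrow> (rev P ! Suc k, rev P ! k) \<in> A) \<longleftrightarrow>
        (\<forall>k. Suc k < length P \<longrightarrow> (P ! k, P ! Suc k) \<in> A)"
  proof safe
    fix k assume arcs: "\<forall>k. Suc k < length P \<longrightarrow> (rev P ! Suc k, rev P ! k) \<in> A"
      and "Suc k < length P"
    then show "(P ! k, P ! Suc k) \<in> A"
      using arcs[rule_format, of "length P - Suc (Suc k)"] by (simp add: rev_nth Suc_diff_Suc)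
  next
    fix k assume arcs: "\<forall>k. Suc k < length P \<longrightarrow> (P ! k, P ! Suc k) \<in> A"
      and "Suc k < length P"
    then show "(rev P ! Suc k, rev P ! k) \<in> A"
      using arcs[rule_format, of "length P - Suc (Suc k)"] by (simp add: rev_nth Suc_diff_Suc)
  qed
  then show ?thesis
    by (auto simp: is_path_def hd_rev last_rev)
qed

lemma npaths_converse: "npaths (A\<inverse>) y x = npaths A x y"
proof -
  have "{P. is_path (A\<inverse>) y x P} = rev ` {P. is_path A x y P}"
  proof (rule set_eqI)
    fix P
    show "P \<in> {P. is_path (A\<inverse>) y x P} \<longleftrightarrow> P \<in> rev ` {P. is_path A x y P}"
      using is_path_converse[of A y x "rev P"] by (auto simp: image_iff is_path_converse)
  qed
  then show ?thesis
    by (simp add: npaths_def card_image)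
qed

lemma is_path_snoc:
  assumes "P \<noteq> []"
  shows "is_path A x y (P @ [y]) \<longleftrightarrow> is_path A x (last P) P \<and> (last P, y) \<in> A \<and> y \<notin> set P"
proof -
  have "(\<forall>k. Suc k < length (P @ [y]) \<longrightarrow> ((P @ [y]) ! k, (P @ [y]) ! Suc k) \<in> A) \<longleftrightarrow>
        (\<forall>k. Suc k < length P \<longrightarrow> (P ! k, P ! Suc k) \<in> A) \<and> (last P, y) \<in> A"
    (is "?arcs \<longleftrightarrow> _")
  proof safe
    fix k assume ?arcs "Suc k < length P"
    then show "(P ! k, P ! Suc k) \<in> A"
      by (auto simp: nth_append dest: spec[of _ k])
  next
    assume ?arcs
    then show "(last P, y) \<in> A"
      using assms by (auto simp: nth_append last_conv_nth dest: spec[of _ "length P - 1"])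
  next
    fix k assume "\<forall>k. Suc k < length P \<longrightarrow> (P ! k, P ! Suc k) \<in> A" "(last P, y) \<in> A"
      "Suc k < length (P @ [y])"
    moreover have "k = length P - 1" if "\<not> Suc k < length P"
      using that \<open>Suc k < length (P @ [y])\<close> by simp
    ultimately show "((P @ [y]) ! k, (P @ [y]) ! Suc k) \<in> A"
      using assms by (cases "Suc k < length P") (auto simp: nth_append last_conv_nth)
  qed
  then show ?thesis
    using assms by (auto simp: is_path_def hd_append)
qed

lemma finite_paths:
  assumes "finite A"
  shows "finite {P. is_path A x y P}"
proof -
  let ?S = "insert x (snd ` A)"
  have nodes: "set P \<subseteq> ?S" if "is_path A x y P" for P
  proof
    fix z assume "z \<in> set P"
    then obtain k where "k < length P" "P ! k = z"
      by (meson in_set_conv_nth)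
    with that show "z \<in> ?S"
      by (cases k) (force simp: is_path_def hd_conv_nth)+
  qed
  moreover have "length P \<le> card ?S" if "is_path A x y P" for P
    using nodes[OF that] that assms
    by (metis card_mono distinct_card finite.insertI finite_imageI is_path_def)
  ultimately have "{P. is_path A x y P} \<subseteq> {P. set P \<subseteq> ?S \<and> length P \<le> card ?S}"
    by blast
  then show ?thesis
    using finite_lists_length_le[of ?S "card ?S"] assms by (meson finite_imageI finite_insert finite_subset)
qed

text \<open>Every path to y ends with an arc into y, and acyclicity keeps y off the rest of the path.\<close>
lemma npaths_preds:
  assumes "finite A" "acyclic A" "x \<noteq> y"
  shows "npaths A x y = (\<Sum>z\<in>preds A y. npaths A x z)"
proof -
  let ?extend = "\<lambda>(z, P). P @ [y]"
  have "{P. is_path A x y P} = ?extend ` (SIGMA z:preds A y. {P. is_path A x z P})"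
  proof safe
    fix P assume path: "is_path A x y P"
    then obtain P' where P': "P = P' @ [y]"
      by (metis append_butlast_last_id is_path_def)
    with path assms(3) have "P' \<noteq> []"
      by (auto simp: is_path_def)
    with path P' show "P \<in> ?extend ` (SIGMA z:preds A y. {P. is_path A x z P})"
      by (force simp: preds_def is_path_snoc)
  next
    fix z P assume "z \<in> preds A y" "is_path A x z P"
    moreover have "y \<notin> set P"
    proof
      assume "y \<in> set P"
      with \<open>is_path A x z P\<close> have "(y, z) \<in> A\<^sup>*" by (rule is_path_rtrancl)
      with \<open>z \<in> preds A y\<close> have "(y, y) \<in> A\<^sup>+" by (simp add: preds_def)
      with assms(2) show False by (simp add: acyclic_def)
    qed
    moreover have "P \<noteq> []" "last P = z"
      using \<open>is_path A x z P\<close> by (auto simp: is_path_def)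
    ultimately show "is_path A x y (P @ [y])"
      by (simp add: preds_def is_path_snoc)
  qed
  moreover have "inj_on ?extend (SIGMA z:preds A y. {P. is_path A x z P})"
    by (auto simp: inj_on_def is_path_def)
  ultimately show ?thesis
    using finite_preds[OF assms(1)] finite_paths[OF assms(1)] by (simp add: npaths_def card_image)
qed

lemma npaths_succs:
  assumes "finite A" "acyclic A" "x \<noteq> y"
  shows "npaths A x y = (\<Sum>z\<in>succs A x. npaths A z y)"
  using npaths_preds[of "A\<inverse>" y x] assms by (simp add: npaths_converse)

lemma npaths_from_sink:
  assumes "finite A" "acyclic A" "succs A x = {}"
  shows "npaths A x y = (if y = x then 1 else 0)"
  using npaths_succs[OF assms(1,2)] assms(3) by simp

section \<open>Deleting and bypassing arcs\<close>

lemma indeg_delete_arc: "z \<noteq> v \<Longrightarrow> indeg (A - {(u, v)}) z = indeg A z"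
  by (simp add: indeg_def)

lemma outdeg_delete_arc: "z \<noteq> u \<Longrightarrow> outdeg (A - {(u, v)}) z = outdeg A z"
  by (simp add: outdeg_def)

text \<open>Deleting an arc uv destroys exactly the x-y paths through it, of which there are m(x,u) m(v,y).\<close>
lemma npaths_delete_arc:
  assumes fin: "finite A" and acyc: "acyclic A" and arc: "(u, v) \<in> A"
  shows "npaths (A - {(u, v)}) x y + npaths A x u * npaths A v y = npaths A x y"
proof -
  let ?A' = "A - {(u, v)}"
  have fin': "finite ?A'" and acyc': "acyclic ?A'"
    using fin acyclic_subset[OF acyc] by auto
  have back_to_v: "npaths A v z = 0" if "(z, v) \<in> A" for z
  proof (rule ccontr)
    assume "npaths A v z \<noteq> 0"
    then have "(v, z) \<in> A\<^sup>*"
      by (simp add: rtrancl_if_npaths_pos)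
    from this that have "(v, v) \<in> A\<^sup>+"
      by (rule rtrancl_into_trancl1)
    with acyc show False
      by (simp add: acyclic_def)
  qed
  show ?thesis
  proof (induction y rule: wf_induct_rule[OF finite_acyclic_wf[OF fin acyc]])
    case (1 y)
    show ?case
    proof (cases "y = x")
      case True
      have "npaths A x u * npaths A v x = 0"
      proof (rule ccontr)
        assume "npaths A x u * npaths A v x \<noteq> 0"
        then have "(v, x) \<in> A\<^sup>*" "(x, u) \<in> A\<^sup>*"
          by (simp_all add: rtrancl_if_npaths_pos)
        then have "(v, u) \<in> A\<^sup>*"
          by (rule rtrancl_trans)
        with arc have "(u, u) \<in> A\<^sup>+"
          by (rule rtrancl_into_trancl2)
        with acyc show False
          by (simp add: acyclic_def)
      qed
      with True show ?thesis
        by simp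
    next
      case False
      have "npaths ?A' x y + npaths A x u * (\<Sum>z\<in>preds ?A' y. npaths A v z)
          = (\<Sum>z\<in>preds ?A' y. npaths ?A' x z + npaths A x u * npaths A v z)"
        using npaths_preds[OF fin' acyc'] False by (simp add: sum.distrib sum_distrib_left)
      also have "\<dots> = (\<Sum>z\<in>preds ?A' y. npaths A x z)"
        using 1 by (intro sum.cong) (auto simp: preds_def)
      finally have sum_eq: "npaths ?A' x y + npaths A x u * (\<Sum>z\<in>preds ?A' y. npaths A v z)
          = (\<Sum>z\<in>preds ?A' y. npaths A x z)" .
      show ?thesis
      proof (cases "y = v")
        case True
        have "preds ?A' v = preds A v - {u}"
          by (auto simp: preds_def)
        moreover have "(\<Sum>z\<in>preds A v - {u}. npaths A v z) = 0"
          using back_to_v by (simp add: preds_def)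
        moreover have "u \<in> preds A v"
          using arc by (simp add: preds_def)
        then have "npaths A x u + (\<Sum>z\<in>preds A v - {u}. npaths A x z) = npaths A x v"
          using npaths_preds[OF fin acyc, of x v] sum.remove[OF finite_preds[OF fin] \<open>u \<in> preds A v\<close>, of "npaths A x"]
            False True by linarith
        ultimately show ?thesis
          using sum_eq True by simp
      next
        case False
        then have "preds ?A' y = preds A y"
          by (auto simp: preds_def)
        with sum_eq False \<open>y \<noteq> x\<close> show ?thesis
          using npaths_preds[OF fin acyc] by simp
      qed
    qed
  qed
qed

text \<open>Suppression of w. The arc ab must be new: arc sets cannot hold parallel arcs.\<close>
locale arc_bypass =
  fixes A :: "(nat \<times> nat) set" and a w b :: nat
  assumes finite_A: "finite A" and acyclic_A: "acyclic A"
    and preds_w: "preds A w = {a}" and succs_w: "succs A w = {b}" and no_arc: "(a, b) \<notin> A"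
begin

definition bypassed :: "(nat \<times> nat) set" where
  "bypassed = A - {(a, w), (w, b)} \<union> {(a, b)}"

lemma arcs_at_w: "(a, w) \<in> A" "(w, b) \<in> A"
  using preds_w succs_w by (auto simp: preds_def succs_def)

lemma a_ne_w: "a \<noteq> w" and b_ne_w: "b \<noteq> w"
  using arcs_at_w acyclic_A by (auto simp: acyclic_def)

lemma suppress_eq: "suppress (V, A) w = (V - {w}, bypassed)"
  using parent_eq[OF preds_w] child_eq[OF succs_w] by (simp add: suppress_def bypassed_def)

lemma bypassed_subset_trancl: "bypassed \<subseteq> A\<^sup>+"
  using arcs_at_w by (auto simp: bypassed_def)

lemma finite_bypassed: "finite bypassed"
  using finite_A by (simp add: bypassed_def)

lemma acyclic_bypassed: "acyclic bypassed"
  using acyclic_subset[OF _ bypassed_subset_trancl] acyclic_A by (simp add: acyclic_def)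

lemma preds_bypassed:
  "y \<noteq> w \<Longrightarrow> preds bypassed y = (if y = b then insert a (preds A y - {w}) else preds A y)"
  using b_ne_w by (auto simp: preds_def bypassed_def)

lemma succs_bypassed:
  "x \<noteq> w \<Longrightarrow> succs bypassed x = (if x = a then insert b (succs A x - {w}) else succs A x)"
  using a_ne_w by (auto simp: succs_def bypassed_def)

lemma w_in_preds_b: "w \<in> preds A b" and a_notin_preds_b: "a \<notin> preds A b"
  using arcs_at_w no_arc by (auto simp: preds_def)

lemma indeg_bypassed: "y \<noteq> w \<Longrightarrow> indeg bypassed y = indeg A y"
  using w_in_preds_b a_notin_preds_b finite_preds[OF finite_A, of b]
    card_gt_0_iff[of "preds A b"]
  by (auto simp: indeg_eq_card_preds preds_bypassed)

lemma outdeg_bypassed: "x \<noteq> w \<Longrightarrow> outdeg bypassed x = outdeg A x"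
proof -
  have "w \<in> succs A a" "b \<notin> succs A a"
    using arcs_at_w no_arc by (auto simp: succs_def)
  then show "x \<noteq> w \<Longrightarrow> ?thesis"
    using finite_succs[OF finite_A, of a] card_gt_0_iff[of "succs A a"]
    by (auto simp: outdeg_eq_card_succs succs_bypassed)
qed

lemma npaths_bypassed:
  assumes "x \<noteq> w" "y \<noteq> w"
  shows "npaths bypassed x y = npaths A x y"
  using assms(2)
proof (induction y rule: wf_induct_rule[OF finite_acyclic_wf[OF finite_bypassed acyclic_bypassed]])
  case (1 y)
  show ?case
  proof (cases "y = x")
    case False
    have "w \<notin> preds bypassed y"
      using succs_w a_ne_w by (auto simp: preds_def succs_def bypassed_def)
    then have "npaths bypassed x y = (\<Sum>z\<in>preds bypassed y. npaths A x z)"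
      using 1 npaths_preds[OF finite_bypassed acyclic_bypassed] False
      by (auto simp: preds_def intro!: sum.cong)
    also have "\<dots> = npaths A x y"
    proof (cases "y = b")
      case True
      have "npaths A x w = npaths A x a"
        using npaths_preds[OF finite_A acyclic_A assms(1)] preds_w by simp
      moreover have "npaths A x b = npaths A x w + (\<Sum>z\<in>preds A b - {w}. npaths A x z)"
        using npaths_preds[OF finite_A acyclic_A] sum.remove[OF finite_preds[OF finite_A] w_in_preds_b]
          False True by simp
      ultimately show ?thesis
        using True 1 a_notin_preds_b finite_preds[OF finite_A, of b] by (simp add: preds_bypassed)
    qed (use 1 False npaths_preds[OF finite_A acyclic_A] in \<open>simp add: preds_bypassed\<close>)
    finally show ?thesis .
  qed simp
qed

end

section \<open>Binary networks and profiles\<close>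

text \<open>The conditions of \<open>phylo_net\<close> that survive every reduction unchanged.\<close>
definition binary_network :: "net \<Rightarrow> bool" where
  "binary_network N \<longleftrightarrow> finite (fst N) \<and> snd N \<subseteq> fst N \<times> fst N \<and> acyclic (snd N) \<and>
     (\<forall>v\<in>fst N. is_root (snd N) v \<or> is_leaf (snd N) v \<or> is_tree_node (snd N) v \<or> is_ret (snd N) v)"

definition leaves :: "net \<Rightarrow> nat set" where
  "leaves N = {v \<in> fst N. is_leaf (snd N) v}"

definition ret_paths :: "net \<Rightarrow> nat \<Rightarrow> nat" where
  "ret_paths N u = (\<Sum>h\<in>V_H N. npaths (snd N) u h)"

text \<open>The extended mu-vector of u with the coordinates outside the leaf set dropped.\<close>
definition profile :: "net \<Rightarrow> nat \<Rightarrow> nat \<times> (nat \<Rightarrow> nat)" where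
  "profile N u = (ret_paths N u, \<lambda>x. if x \<in> leaves N then npaths (snd N) u x else 0)"

lemma profile_eq_iff:
  "profile N u = profile N v \<longleftrightarrow>
     ret_paths N u = ret_paths N v \<and> (\<forall>x\<in>leaves N. npaths (snd N) u x = npaths (snd N) v x)"
  by (auto simp: profile_def fun_eq_iff)

lemma binary_network_if_phylo_net: "phylo_net n X N \<Longrightarrow> binary_network N"
  by (simp add: phylo_net_def binary_network_def Let_def)

context
  fixes V D :: "nat set" and A A' :: "(nat \<times> nat) set"
  assumes same_degrees: "\<And>z. z \<in> V - D \<Longrightarrow> indeg A' z = indeg A z \<and> outdeg A' z = outdeg A z"
begin

lemma leaves_remove: "leaves (V - D, A') = leaves (V, A) - D"
  using same_degrees by (auto simp: leaves_def is_leaf_def)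

lemma V_T_remove: "V_T (V - D, A') = V_T (V, A) - D"
  using same_degrees by (auto simp: V_T_def is_leaf_def is_tree_node_def)

lemma V_H_remove: "V_H (V - D, A') = V_H (V, A) - D"
  using same_degrees by (auto simp: V_H_def is_ret_def)

lemma binary_network_remove:
  assumes "binary_network (V, A)" "A' \<subseteq> (V - D) \<times> (V - D)" "acyclic A'"
  shows "binary_network (V - D, A')"
  using assms same_degrees
  by (simp add: binary_network_def is_root_def is_leaf_def is_tree_node_def is_ret_def)

end

context
  fixes V :: "nat set" and A :: "(nat \<times> nat) set"
  assumes network: "binary_network (V, A)"
begin

lemma finite_arcs: "finite A"
  using network finite_subset by (fastforce simp: binary_network_def)

lemma acyclic_arcs: "acyclic A"
  using network by (simp add: binary_network_def)

lemma arcs_subset: "A \<subseteq> V \<times> V"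
  using network by (simp add: binary_network_def)

lemma leaf_arcs:
  assumes "is_leaf A v"
  obtains u where "preds A v = {u}" "succs A v = {}"
  using assms finite_succs[OF finite_arcs]
  by (auto simp: is_leaf_def indeg_eq_card_preds outdeg_eq_card_succs card_1_singleton_iff)

end

section \<open>Reducing a cherry\<close>

locale cherry_reduction =
  fixes V :: "nat set" and A :: "(nat \<times> nat) set" and i j :: nat
  assumes network: "binary_network (V, A)" and cherry: "is_cherry (V, A) i j"
begin

definition p :: nat where "p = parent A i"

definition q :: nat where "q = parent A p"

lemmas finite_A = finite_arcs[OF network] and acyclic_A = acyclic_arcs[OF network]
  and arcs_in_V = arcs_subset[OF network]

lemma leaf_i_j: "i \<noteq> j" "is_leaf A i" "is_leaf A j" "i \<in> V" "j \<in> V"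
  using cherry by (auto simp: is_cherry_def)

lemma preds_i: "preds A i = {p}" and succs_i: "succs A i = {}"
  using leaf_arcs[OF network leaf_i_j(2)] parent_eq by (metis p_def)+

lemma preds_j: "preds A j = {p}" and succs_j: "succs A j = {}"
  using leaf_arcs[OF network leaf_i_j(3)] parent_eq cherry by (metis p_def is_cherry_def snd_conv)+

lemma tree_node_p: "is_tree_node A p" and succs_p: "succs A p = {i, j}"
proof -
  have "p \<in> V"
    using preds_i arcs_in_V by (auto simp: preds_def)
  have ij: "{i, j} \<subseteq> succs A p"
    using preds_i preds_j by (auto simp: preds_def succs_def)
  then have "2 \<le> outdeg A p"
    using leaf_i_j(1) finite_succs[OF finite_A]
    by (metis card_2_iff card_mono outdeg_eq_card_succs)
  with network \<open>p \<in> V\<close> show "is_tree_node A p"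
    by (auto simp: binary_network_def is_root_def is_leaf_def is_ret_def)
  then have "card (succs A p) = card {i, j}"
    using leaf_i_j(1) by (simp add: is_tree_node_def outdeg_eq_card_succs)
  with ij show "succs A p = {i, j}"
    by (metis card_subset_eq finite_succs[OF finite_A])
qed

lemma preds_p: "preds A p = {q}"
  using tree_node_p parent_eq
  by (auto simp: q_def is_tree_node_def indeg_eq_card_preds card_1_singleton_iff)

lemma arcs_at_p: "(p, i) \<in> A" "(p, j) \<in> A" "(q, p) \<in> A"
  using preds_p succs_p by (auto simp: preds_def succs_def)

lemma distinct_nodes: "p \<noteq> i" "p \<noteq> j" "q \<noteq> p" "q \<noteq> i" "q \<noteq> j"
proof -
  have "(z, z) \<notin> A" for z
    using acyclic_A by (auto simp: acyclic_def)
  then show "p \<noteq> i" "p \<noteq> j" "q \<noteq> p" "q \<noteq> i" "q \<noteq> j"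
    using arcs_at_p succs_i succs_j by (auto simp: succs_def)
qed

sublocale bypass_p: arc_bypass "A - {(p, i)}" q p j
proof
  show "finite (A - {(p, i)})" "acyclic (A - {(p, i)})"
    using finite_A acyclic_subset[OF acyclic_A] by auto
  show "preds (A - {(p, i)}) p = {q}" "succs (A - {(p, i)}) p = {j}"
    using preds_p succs_p distinct_nodes leaf_i_j(1) by (auto simp: preds_def succs_def)
  show "(q, j) \<notin> A - {(p, i)}"
    using preds_j distinct_nodes by (auto simp: preds_def)
qed

lemma reduce_eq: "reduce (V, A) (i, j) = (V - {i, p}, bypass_p.bypassed)"
proof -
  have "reduce (V, A) (i, j) = suppress (V - {i}, A - {(p, i)}) p"
    using cherry by (simp add: reduce_def p_def Let_def)
  also have "\<dots> = (V - {i} - {p}, bypass_p.bypassed)"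
    by (rule bypass_p.suppress_eq)
  finally show ?thesis
    by (simp add: insert_commute Diff_insert[symmetric])
qed

lemma npaths_from_i: "npaths A i y = (if y = i then 1 else 0)"
  and npaths_from_j: "npaths A j y = (if y = j then 1 else 0)"
  using npaths_from_sink[OF finite_A acyclic_A] succs_i succs_j by auto

lemma npaths_from_p: "npaths A p y = (if y \<in> {p, i, j} then 1 else 0)"
  using npaths_succs[OF finite_A acyclic_A, of p y] succs_p leaf_i_j(1) distinct_nodes
  by (cases "y = p") (auto simp: npaths_from_i npaths_from_j)

lemma npaths_to_i_j: "x \<notin> {i, j, p} \<Longrightarrow> npaths A x i = npaths A x j"
  using npaths_preds[OF finite_A acyclic_A] preds_i preds_j by simp

lemma npaths_reduced:
  assumes "x \<noteq> p" "y \<noteq> p" "y \<noteq> i"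
  shows "npaths bypass_p.bypassed x y = npaths A x y"
  using bypass_p.npaths_bypassed[OF assms(1,2)] npaths_delete_arc[OF finite_A acyclic_A, of p i x y]
    arcs_at_p assms(3) by (simp add: npaths_from_i)

lemma degrees_reduced:
  assumes "z \<in> V - {i, p}"
  shows "indeg bypass_p.bypassed z = indeg A z \<and> outdeg bypass_p.bypassed z = outdeg A z"
proof -
  from assms have "z \<noteq> i" "z \<noteq> p"
    by auto
  then show ?thesis
    by (simp add: bypass_p.indeg_bypassed bypass_p.outdeg_bypassed indeg_delete_arc outdeg_delete_arc)
qed

lemma arcs_reduced: "bypass_p.bypassed \<subseteq> (V - {i, p}) \<times> (V - {i, p})"
proof (rule subrelI)
  fix x y assume "(x, y) \<in> bypass_p.bypassed"
  then consider "(x, y) = (q, j)" | "(x, y) \<in> A" "(x, y) \<notin> {(p, i), (q, p), (p, j)}"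
    by (auto simp: bypass_p.bypassed_def)
  then show "(x, y) \<in> (V - {i, p}) \<times> (V - {i, p})"
  proof cases
    case 1
    then show ?thesis
      using arcs_in_V arcs_at_p distinct_nodes leaf_i_j by auto
  next
    case 2
    then have "y \<in> succs A x" "x \<in> preds A y"
      by (simp_all add: preds_def succs_def)
    then have "x \<noteq> i" "x \<noteq> p" "y \<noteq> i" "y \<noteq> p"
      using 2(2) preds_i preds_p succs_i succs_p by auto
    with 2 arcs_in_V show ?thesis
      by auto
  qed
qed

lemma binary_network_reduced: "binary_network (reduce (V, A) (i, j))"
  unfolding reduce_eq
  by (rule binary_network_remove[OF degrees_reduced network arcs_reduced bypass_p.acyclic_bypassed])

lemma V_T_reduced: "V_T (reduce (V, A) (i, j)) = V_T (V, A) - {i, p}"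
  unfolding reduce_eq by (rule V_T_remove[OF degrees_reduced])

lemma profile_reduced:
  assumes "x \<noteq> p"
  shows "profile (reduce (V, A) (i, j)) x =
    (ret_paths (V, A) x, \<lambda>y. if y \<in> leaves (V, A) - {i} then npaths A x y else 0)"
proof -
  have "p \<notin> leaves (V, A)" and V_H_off: "V_H (V, A) \<inter> {i, p} = {}"
    using tree_node_p leaf_i_j by (auto simp: leaves_def V_H_def is_tree_node_def is_leaf_def is_ret_def)
  moreover have "V_H (V - {i, p}, bypass_p.bypassed) = V_H (V, A) - {i, p}"
    by (rule V_H_remove[OF degrees_reduced])
  moreover have "leaves (V - {i, p}, bypass_p.bypassed) = leaves (V, A) - {i, p}"
    by (rule leaves_remove[OF degrees_reduced])
  ultimately have V_H_eq: "V_H (V - {i, p}, bypass_p.bypassed) = V_H (V, A)"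
    and leaves_eq: "leaves (V - {i, p}, bypass_p.bypassed) = leaves (V, A) - {i}"
    by auto
  have "ret_paths (reduce (V, A) (i, j)) x = (\<Sum>h\<in>V_H (V, A). npaths bypass_p.bypassed x h)"
    by (simp add: reduce_eq ret_paths_def V_H_eq)
  also have "\<dots> = ret_paths (V, A) x"
    unfolding ret_paths_def snd_conv
  proof (rule sum.cong[OF refl])
    fix h assume "h \<in> V_H (V, A)"
    with V_H_off have "h \<noteq> p" "h \<noteq> i"
      by auto
    then show "npaths bypass_p.bypassed x h = npaths A x h"
      by (rule npaths_reduced[OF assms])
  qed
  moreover have "npaths bypass_p.bypassed x y = npaths A x y" if "y \<in> leaves (V, A) - {i}" for y
    using npaths_reduced[OF assms] that \<open>p \<notin> leaves (V, A)\<close> by (metis DiffE insertCI)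
  ultimately show ?thesis
    by (simp add: profile_def leaves_eq reduce_eq fun_eq_iff)
qed

lemma ret_paths_zero:
  assumes "x \<in> {i, j, p}"
  shows "ret_paths (V, A) x = 0"
proof -
  have "V_H (V, A) \<inter> {i, j, p} = {}"
    using tree_node_p leaf_i_j by (auto simp: V_H_def is_tree_node_def is_leaf_def is_ret_def)
  then have "\<forall>h\<in>V_H (V, A). npaths A x h = 0"
    using assms by (auto simp: npaths_from_i npaths_from_j npaths_from_p)
  then show ?thesis
    unfolding ret_paths_def snd_conv by (rule sum.neutral)
qed

lemma j_in_V_T: "j \<in> V_T (V, A)" and i_j_in_leaves: "i \<in> leaves (V, A)" "j \<in> leaves (V, A)"
  using leaf_i_j by (auto simp: V_T_def leaves_def)

text \<open>A node sharing the profile of p would share the profile of j after the reduction.\<close>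
lemma profile_determines_i_p:
  assumes u: "u \<in> {i, p}" and v: "v \<in> V_T (V, A)" and same: "profile (V, A) v = profile (V, A) u"
    and inj_reduced: "inj_on (profile (reduce (V, A) (i, j))) (V_T (reduce (V, A) (i, j)))"
  shows "v = u"
proof -
  from same i_j_in_leaves have at_i: "npaths A v i = npaths A u i" and at_j: "npaths A v j = npaths A u j"
    and ret: "ret_paths (V, A) v = ret_paths (V, A) u"
    by (auto simp: profile_eq_iff)
  have u_i: "npaths A u i = 1"
    using u by (auto simp: npaths_from_i npaths_from_p)
  show ?thesis
  proof (cases "v \<in> {i, j, p}")
    case True
    with u at_i at_j show ?thesis
      using leaf_i_j(1) distinct_nodes by (auto simp: npaths_from_i npaths_from_j npaths_from_p)
  next
    case False
    then have "npaths A v j = 1"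
      using npaths_to_i_j at_i u_i by simp
    with u at_j leaf_i_j(1) have "u = p"
      by (auto simp: npaths_from_i)
    have "npaths A v y = npaths A j y" if "y \<in> leaves (V, A) - {i}" for y
    proof -
      have "y \<noteq> p"
        using that tree_node_p by (auto simp: leaves_def is_leaf_def is_tree_node_def)
      with that same i_j_in_leaves \<open>u = p\<close> show ?thesis
        by (auto simp: profile_eq_iff npaths_from_p npaths_from_j)
    qed
    moreover have "ret_paths (V, A) v = ret_paths (V, A) j"
      using ret \<open>u = p\<close> ret_paths_zero by simp
    ultimately have "profile (reduce (V, A) (i, j)) v = profile (reduce (V, A) (i, j)) j"
      using False distinct_nodes by (simp add: profile_reduced fun_eq_iff)
    moreover have "v \<in> V_T (reduce (V, A) (i, j))" "j \<in> V_T (reduce (V, A) (i, j))"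
      using v False j_in_V_T leaf_i_j(1) distinct_nodes by (auto simp: V_T_reduced)
    ultimately have "v = j"
      using inj_reduced by (auto dest: inj_onD)
    with False show ?thesis
      by simp
  qed
qed

lemma inj_on_profile_if_reduced:
  assumes inj_reduced: "inj_on (profile (reduce (V, A) (i, j))) (V_T (reduce (V, A) (i, j)))"
  shows "inj_on (profile (V, A)) (V_T (V, A))"
proof (rule inj_onI)
  fix u v assume u: "u \<in> V_T (V, A)" and v: "v \<in> V_T (V, A)"
    and same: "profile (V, A) u = profile (V, A) v"
  consider "u \<in> {i, p}" | "v \<in> {i, p}" | "u \<notin> {i, p}" "v \<notin> {i, p}"
    by blast
  then show "u = v"
  proof cases
    case 1
    then show ?thesis
      using profile_determines_i_p[OF 1 v same[symmetric] inj_reduced] by simp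
  next
    case 2
    then show ?thesis
      using profile_determines_i_p[OF 2 u same inj_reduced] by simp
  next
    case 3
    then have "profile (reduce (V, A) (i, j)) u = profile (reduce (V, A) (i, j)) v"
      using same by (auto simp: profile_reduced profile_eq_iff fun_eq_iff)
    moreover have "u \<in> V_T (reduce (V, A) (i, j))" "v \<in> V_T (reduce (V, A) (i, j))"
      using u v 3 by (auto simp: V_T_reduced)
    ultimately show ?thesis
      using inj_reduced by (auto dest: inj_onD)
  qed
qed

end

section \<open>Reducing a reticulated cherry\<close>

locale ret_cherry_reduction =
  fixes V :: "nat set" and A :: "(nat \<times> nat) set" and i j :: nat
  assumes network: "binary_network (V, A)" and ret_cherry: "is_ret_cherry (V, A) i j"
begin

definition r :: nat where "r = parent A i"

definition t :: nat where "t = parent A j"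

definition a :: nat where "a = the_elem (preds A r - {t})"

definition c :: nat where "c = parent A t"

lemmas finite_A = finite_arcs[OF network] and acyclic_A = acyclic_arcs[OF network]
  and arcs_in_V = arcs_subset[OF network]

lemma leaf_i_j: "i \<noteq> j" "is_leaf A i" "is_leaf A j" "i \<in> V" "j \<in> V"
  using ret_cherry by (auto simp: is_ret_cherry_def)

lemma ret_r: "is_ret A r" and tree_node_t: "is_tree_node A t" and arc_t_r: "(t, r) \<in> A"
  using ret_cherry by (auto simp: is_ret_cherry_def r_def t_def)

lemma preds_i: "preds A i = {r}" and succs_i: "succs A i = {}"
  using leaf_arcs[OF network leaf_i_j(2)] parent_eq by (metis r_def)+

lemma preds_j: "preds A j = {t}" and succs_j: "succs A j = {}"
  using leaf_arcs[OF network leaf_i_j(3)] parent_eq by (metis t_def)+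

lemma irreflexive: "(x, x) \<notin> A"
  using acyclic_A by (auto simp: acyclic_def)

lemma succs_r: "succs A r = {i}"
proof -
  have "i \<in> succs A r" "card (succs A r) = 1"
    using preds_i ret_r by (auto simp: preds_def succs_def is_ret_def outdeg_eq_card_succs)
  then show ?thesis
    by (metis card_1_singletonE singletonD)
qed

lemma preds_r: "preds A r = {t, a}" and a_ne_t: "a \<noteq> t"
proof -
  have "t \<in> preds A r" "card (preds A r) = 2"
    using arc_t_r ret_r by (auto simp: preds_def is_ret_def indeg_eq_card_preds)
  then obtain b where "b \<noteq> t" "preds A r = {t, b}"
    by (metis card_2_iff doubleton_eq_iff insertE singletonD)
  moreover from this have "a = b"
    by (simp add: a_def)
  ultimately show "preds A r = {t, a}" "a \<noteq> t"
    by simp_all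
qed

lemma succs_t: "succs A t = {j, r}"
proof -
  have "{j, r} \<subseteq> succs A t" "card (succs A t) = 2"
    using preds_j arc_t_r tree_node_t by (auto simp: preds_def succs_def is_tree_node_def outdeg_eq_card_succs)
  moreover have "j \<noteq> r"
    using succs_j succs_r by auto
  ultimately show ?thesis
    by (metis card_2_iff card_subset_eq finite_succs[OF finite_A])
qed

lemma preds_t: "preds A t = {c}"
  using tree_node_t parent_eq
  by (auto simp: c_def is_tree_node_def indeg_eq_card_preds card_1_singleton_iff)

lemma arcs_near_leaves: "(r, i) \<in> A" "(t, j) \<in> A" "(a, r) \<in> A" "(c, t) \<in> A"
  using preds_i preds_j preds_r preds_t by (auto simp: preds_def)

lemma distinct_nodes:
  "r \<noteq> i" "r \<noteq> j" "r \<noteq> t" "t \<noteq> i" "t \<noteq> j" "a \<noteq> r" "a \<noteq> i" "a \<noteq> j" "c \<noteq> t"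
  "c \<noteq> i" "c \<noteq> j"
  using arcs_near_leaves arc_t_r irreflexive succs_i succs_j by (auto simp: succs_def)

lemma c_ne_r: "c \<noteq> r"
proof
  assume "c = r"
  then have "t \<in> succs A r"
    using arcs_near_leaves(4) by (simp add: succs_def)
  with succs_r distinct_nodes(4) show False
    by simp
qed

sublocale bypass_r: arc_bypass "A - {(t, r)}" a r i
proof
  show "finite (A - {(t, r)})" "acyclic (A - {(t, r)})"
    using finite_A acyclic_subset[OF acyclic_A] by auto
  show "preds (A - {(t, r)}) r = {a}" "succs (A - {(t, r)}) r = {i}"
    using preds_r succs_r a_ne_t distinct_nodes by (auto simp: preds_def succs_def)
  show "(a, i) \<notin> A - {(t, r)}"
    using preds_i distinct_nodes by (auto simp: preds_def)
qed

sublocale bypass_t: arc_bypass bypass_r.bypassed c t j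
proof
  show "finite bypass_r.bypassed" "acyclic bypass_r.bypassed"
    by (rule bypass_r.finite_bypassed, rule bypass_r.acyclic_bypassed)
  have "preds (A - {(t, r)}) t = preds A t"
    using distinct_nodes by (auto simp: preds_def)
  then show "preds bypass_r.bypassed t = {c}"
    using preds_t distinct_nodes(3,4) bypass_r.preds_bypassed[of t] by simp
  have "succs (A - {(t, r)}) t = {j}"
    using succs_t distinct_nodes by (auto simp: succs_def)
  then show "succs bypass_r.bypassed t = {j}"
    using a_ne_t distinct_nodes(3) bypass_r.succs_bypassed[of t] by simp
  have "(c, j) \<notin> A"
    using preds_j distinct_nodes by (auto simp: preds_def)
  then show "(c, j) \<notin> bypass_r.bypassed"
    using leaf_i_j(1) by (simp add: bypass_r.bypassed_def)
qed

lemma reduce_eq: "reduce (V, A) (i, j) = (V - {r, t}, bypass_t.bypassed)"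
proof -
  have "\<not> is_cherry (V, A) i j"
    using distinct_nodes preds_i preds_j parent_eq by (auto simp: is_cherry_def)
  then have "reduce (V, A) (i, j) = suppress (suppress (V, A - {(t, r)}) r) t"
    by (simp add: reduce_def Let_def r_def t_def)
  also have "\<dots> = (V - {r} - {t}, bypass_t.bypassed)"
    by (simp add: bypass_r.suppress_eq bypass_t.suppress_eq)
  finally show ?thesis
    by (simp add: insert_commute Diff_insert[symmetric])
qed

lemma npaths_from_i: "npaths A i y = (if y = i then 1 else 0)"
  and npaths_from_j: "npaths A j y = (if y = j then 1 else 0)"
  using npaths_from_sink[OF finite_A acyclic_A] succs_i succs_j by auto

lemma npaths_from_r: "y \<noteq> r \<Longrightarrow> npaths A r y = (if y = i then 1 else 0)"
  using npaths_succs[OF finite_A acyclic_A, of r y] succs_r by (simp add: npaths_from_i)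

lemma npaths_from_t: "npaths A t y = (if y \<in> {t, j, r, i} then 1 else 0)"
proof (cases "y = t")
  case False
  then show ?thesis
    using npaths_succs[OF finite_A acyclic_A, of t y] succs_t distinct_nodes leaf_i_j(1)
    by (cases "y = r") (auto simp: npaths_from_j npaths_from_r)
qed simp

lemma npaths_to_r: "npaths A x r = (if x = i then 0 else npaths A x i)"
  using npaths_preds[OF finite_A acyclic_A, of x i] preds_i distinct_nodes(1)
  by (simp add: npaths_from_i)

lemma npaths_to_t: "npaths A x t = (if x = j then 0 else npaths A x j)"
  using npaths_preds[OF finite_A acyclic_A, of x j] preds_j distinct_nodes(5)
  by (simp add: npaths_from_j)

lemma npaths_to_t_le_to_r: "x \<noteq> r \<Longrightarrow> npaths A x t \<le> npaths A x r"
  using npaths_preds[OF finite_A acyclic_A, of x r] preds_r a_ne_t by simp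

text \<open>Deleting the arc tr destroys the m(x,t) paths from x to the leaf i that pass through t.\<close>
lemma npaths_reduced:
  assumes "x \<notin> {r, t}" "y \<notin> {r, t}"
  shows "npaths bypass_t.bypassed x y + (if y = i then npaths A x t else 0) = npaths A x y"
  using bypass_t.npaths_bypassed[of x y] bypass_r.npaths_bypassed[of x y]
    npaths_delete_arc[OF finite_A acyclic_A arc_t_r, of x y] assms
  by (auto simp: npaths_from_r)

lemma degrees_reduced:
  assumes "z \<in> V - {r, t}"
  shows "indeg bypass_t.bypassed z = indeg A z \<and> outdeg bypass_t.bypassed z = outdeg A z"
proof -
  from assms have "z \<noteq> r" "z \<noteq> t"
    by auto
  then show ?thesis
    by (simp add: bypass_t.indeg_bypassed bypass_t.outdeg_bypassed bypass_r.indeg_bypassed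
        bypass_r.outdeg_bypassed indeg_delete_arc outdeg_delete_arc)
qed

lemma arcs_reduced: "bypass_t.bypassed \<subseteq> (V - {r, t}) \<times> (V - {r, t})"
proof (rule subrelI)
  fix x y assume "(x, y) \<in> bypass_t.bypassed"
  then consider "(x, y) = (a, i)" | "(x, y) = (c, j)"
    | "(x, y) \<in> A" "(x, y) \<notin> {(t, r), (a, r), (r, i), (c, t), (t, j)}"
    unfolding bypass_t.bypassed_def unfolding bypass_r.bypassed_def by auto
  then show "(x, y) \<in> (V - {r, t}) \<times> (V - {r, t})"
  proof cases
    case 3
    then have "y \<in> succs A x" "x \<in> preds A y"
      by (simp_all add: preds_def succs_def)
    then have "x \<noteq> r" "x \<noteq> t" "y \<noteq> r" "y \<noteq> t"
      using 3(2) preds_r preds_t succs_r succs_t by auto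
    with 3(1) arcs_in_V show ?thesis
      by auto
  qed (use arcs_in_V arcs_near_leaves distinct_nodes a_ne_t c_ne_r leaf_i_j in auto)
qed

lemma binary_network_reduced: "binary_network (reduce (V, A) (i, j))"
  unfolding reduce_eq
  by (rule binary_network_remove[OF degrees_reduced network arcs_reduced bypass_t.acyclic_bypassed])

lemma not_V_T_r: "r \<notin> V_T (V, A)"
  using ret_r by (auto simp: V_T_def is_ret_def is_leaf_def is_tree_node_def)

lemma V_T_reduced: "V_T (reduce (V, A) (i, j)) = V_T (V, A) - {t}"
proof -
  have "V_T (V - {r, t}, bypass_t.bypassed) = V_T (V, A) - {r, t}"
    by (rule V_T_remove[OF degrees_reduced])
  with not_V_T_r show ?thesis
    unfolding reduce_eq by blast
qed

lemma r_in_V_H: "r \<in> V_H (V, A)" and V_H_off: "V_H (V, A) \<inter> {i, j, t} = {}"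
  using ret_r tree_node_t leaf_i_j arcs_in_V arcs_near_leaves
  by (auto simp: V_H_def is_ret_def is_leaf_def is_tree_node_def)

lemma finite_V_H: "finite (V_H (V, A))"
  using network by (simp add: binary_network_def V_H_def)

lemma ret_paths_split: "ret_paths (V, A) x = npaths A x r + (\<Sum>h\<in>V_H (V, A) - {r}. npaths A x h)"
  unfolding ret_paths_def snd_conv by (rule sum.remove[OF finite_V_H r_in_V_H])

lemma npaths_to_r_le_ret_paths: "npaths A x r \<le> ret_paths (V, A) x"
  by (simp add: ret_paths_split)

lemma ret_paths_i_j_t: "ret_paths (V, A) i = 0" "ret_paths (V, A) j = 0" "ret_paths (V, A) t = 1"
proof -
  have "npaths A x h = 0" if "x \<in> {i, j, t}" "h \<in> V_H (V, A) - {r}" for x h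
  proof -
    from that(2) V_H_off have "h \<notin> {t, j, r, i}"
      by auto
    with that(1) show ?thesis
      by (auto simp: npaths_from_i npaths_from_j npaths_from_t)
  qed
  then have "(\<Sum>h\<in>V_H (V, A) - {r}. npaths A x h) = 0" if "x \<in> {i, j, t}" for x
    using that by (simp add: sum.neutral)
  moreover have "npaths A i r = 0" "npaths A j r = 0" "npaths A t r = 1"
    using distinct_nodes by (simp_all add: npaths_from_i npaths_from_j npaths_from_t)
  ultimately show "ret_paths (V, A) i = 0" "ret_paths (V, A) j = 0" "ret_paths (V, A) t = 1"
    by (simp_all add: ret_paths_split)
qed

lemma leaves_reduced: "leaves (reduce (V, A) (i, j)) = leaves (V, A)"
proof -
  have "leaves (V - {r, t}, bypass_t.bypassed) = leaves (V, A) - {r, t}"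
    by (rule leaves_remove[OF degrees_reduced])
  moreover have "r \<notin> leaves (V, A)" "t \<notin> leaves (V, A)"
    using ret_r tree_node_t by (auto simp: leaves_def is_leaf_def is_ret_def is_tree_node_def)
  ultimately show ?thesis
    unfolding reduce_eq by blast
qed

lemma ret_paths_reduced:
  assumes "x \<notin> {r, t}"
  shows "ret_paths (reduce (V, A) (i, j)) x + npaths A x r = ret_paths (V, A) x"
proof -
  have "V_H (V - {r, t}, bypass_t.bypassed) = V_H (V, A) - {r, t}"
    by (rule V_H_remove[OF degrees_reduced])
  also have "\<dots> = V_H (V, A) - {r}"
    using V_H_off by auto
  finally have "ret_paths (reduce (V, A) (i, j)) x = (\<Sum>h\<in>V_H (V, A) - {r}. npaths bypass_t.bypassed x h)"
    by (simp add: reduce_eq ret_paths_def)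
  also have "\<dots> = (\<Sum>h\<in>V_H (V, A) - {r}. npaths A x h)"
  proof (rule sum.cong[OF refl])
    fix h assume "h \<in> V_H (V, A) - {r}"
    with V_H_off have "h \<notin> {r, t}" "h \<noteq> i"
      by auto
    then show "npaths bypass_t.bypassed x h = npaths A x h"
      using npaths_reduced[OF assms, of h] by simp
  qed
  finally show ?thesis
    by (simp add: ret_paths_split)
qed

text \<open>The subtractions are exact, by \<open>npaths_reduced\<close> and \<open>ret_paths_reduced\<close>.\<close>
lemma profile_reduced:
  assumes "x \<notin> {r, t}"
  shows "profile (reduce (V, A) (i, j)) x = (ret_paths (V, A) x - npaths A x r,
    \<lambda>y. if y \<in> leaves (V, A) then npaths A x y - (if y = i then npaths A x t else 0) else 0)"
proof -
  have "y \<notin> {r, t}" if "y \<in> leaves (V, A)" for y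
    using that ret_r tree_node_t by (auto simp: leaves_def is_leaf_def is_ret_def is_tree_node_def)
  then have "npaths bypass_t.bypassed x y = npaths A x y - (if y = i then npaths A x t else 0)"
    if "y \<in> leaves (V, A)" for y
    using npaths_reduced[OF assms] that by (metis add_diff_cancel_right')
  moreover have "ret_paths (reduce (V, A) (i, j)) x = ret_paths (V, A) x - npaths A x r"
    using ret_paths_reduced[OF assms] by simp
  ultimately show ?thesis
    by (simp add: profile_def leaves_reduced fun_eq_iff, simp add: reduce_eq)
qed

lemma j_in_V_T: "j \<in> V_T (V, A)" and i_j_in_leaves: "i \<in> leaves (V, A)" "j \<in> leaves (V, A)"
  using leaf_i_j by (auto simp: V_T_def leaves_def)

lemma profile_determines_i:
  assumes "v \<noteq> r" "profile (V, A) v = profile (V, A) i"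
  shows "v = i"
proof (rule ccontr)
  assume "v \<noteq> i"
  from assms(2) i_j_in_leaves have "npaths A v i = 1" "ret_paths (V, A) v = 0"
    by (auto simp: profile_eq_iff npaths_from_i ret_paths_i_j_t)
  with \<open>v \<noteq> i\<close> npaths_to_r_le_ret_paths[of v] show False
    by (simp add: npaths_to_r)
qed

lemma profile_determines_j:
  assumes "v \<noteq> r" "profile (V, A) v = profile (V, A) j"
  shows "v = j"
proof (rule ccontr)
  assume "v \<noteq> j"
  from assms(2) i_j_in_leaves leaf_i_j(1) have "npaths A v j = 1" "npaths A v i = 0"
    by (auto simp: profile_eq_iff npaths_from_j)
  with \<open>v \<noteq> j\<close> npaths_to_t_le_to_r[OF assms(1)] show False
    by (simp add: npaths_to_r npaths_to_t split: if_splits)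
qed

lemma profile_determines_npaths_to_r_t:
  assumes "u \<noteq> r" "v \<noteq> r" and same: "profile (V, A) u = profile (V, A) v"
  shows "npaths A u r = npaths A v r" "npaths A u t = npaths A v t"
proof -
  from same i_j_in_leaves have "npaths A u i = npaths A v i" "npaths A u j = npaths A v j"
    by (auto simp: profile_eq_iff)
  moreover have "u = i \<longleftrightarrow> v = i" "u = j \<longleftrightarrow> v = j"
    using profile_determines_i profile_determines_j assms by metis+
  ultimately show "npaths A u r = npaths A v r" "npaths A u t = npaths A v t"
    by (simp_all add: npaths_to_r npaths_to_t)
qed

text \<open>A node sharing the profile of t would share the profile of j after the reduction.\<close>
lemma profile_determines_t:
  assumes v: "v \<in> V_T (V, A)" and same: "profile (V, A) v = profile (V, A) t"
    and inj_reduced: "inj_on (profile (reduce (V, A) (i, j))) (V_T (reduce (V, A) (i, j)))"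
  shows "v = t"
proof (rule ccontr)
  assume "v \<noteq> t"
  have "v \<noteq> r"
    using v not_V_T_r by blast
  then have to_r_t: "npaths A v r = 1" "npaths A v t = 1"
    using profile_determines_npaths_to_r_t[OF _ _ same] distinct_nodes by (auto simp: npaths_from_t)
  have "y \<notin> {r, t}" if "y \<in> leaves (V, A)" for y
    using that ret_r tree_node_t by (auto simp: leaves_def is_leaf_def is_ret_def is_tree_node_def)
  then have "npaths A v y - (if y = i then npaths A v t else 0)
      = npaths A j y - (if y = i then npaths A j t else 0)" if "y \<in> leaves (V, A)" for y
    using that same to_r_t leaf_i_j(1) distinct_nodes
    by (auto simp: profile_eq_iff npaths_from_t npaths_from_j)
  moreover have "ret_paths (V, A) v - npaths A v r = ret_paths (V, A) j - npaths A j r"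
    using same to_r_t distinct_nodes by (simp add: profile_eq_iff ret_paths_i_j_t npaths_from_j)
  moreover have "v \<notin> {r, t}" "j \<notin> {r, t}"
    using \<open>v \<noteq> r\<close> \<open>v \<noteq> t\<close> distinct_nodes by auto
  ultimately have "profile (reduce (V, A) (i, j)) v = profile (reduce (V, A) (i, j)) j"
    by (simp add: profile_reduced fun_eq_iff)
  moreover have "v \<in> V_T (reduce (V, A) (i, j))" "j \<in> V_T (reduce (V, A) (i, j))"
    using v \<open>v \<noteq> t\<close> j_in_V_T distinct_nodes by (auto simp: V_T_reduced)
  ultimately have "v = j"
    using inj_reduced by (auto dest: inj_onD)
  with same profile_determines_j[of t] distinct_nodes show False
    by auto
qed

lemma inj_on_profile_if_reduced:
  assumes inj_reduced: "inj_on (profile (reduce (V, A) (i, j))) (V_T (reduce (V, A) (i, j)))"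
  shows "inj_on (profile (V, A)) (V_T (V, A))"
proof (rule inj_onI)
  fix u v assume u: "u \<in> V_T (V, A)" and v: "v \<in> V_T (V, A)"
    and same: "profile (V, A) u = profile (V, A) v"
  consider "u = t" | "v = t" | "u \<notin> {r, t}" "v \<notin> {r, t}"
    using u v not_V_T_r by blast
  then show "u = v"
  proof cases
    case 1
    then show ?thesis
      using profile_determines_t[OF v _ inj_reduced] same by simp
  next
    case 2
    then show ?thesis
      using profile_determines_t[OF u _ inj_reduced] same by simp
  next
    case 3
    then have "profile (reduce (V, A) (i, j)) u = profile (reduce (V, A) (i, j)) v"
      using same profile_determines_npaths_to_r_t[of u v]
      by (auto simp: profile_reduced profile_eq_iff fun_eq_iff)
    moreover have "u \<in> V_T (reduce (V, A) (i, j))" "v \<in> V_T (reduce (V, A) (i, j))"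
      using u v 3 by (auto simp: V_T_reduced)
    ultimately show ?thesis
      using inj_reduced by (auto dest: inj_onD)
  qed
qed

end

section \<open>Orchard networks\<close>

lemma inj_on_profile_I:
  assumes "is_I N"
  shows "inj_on (profile N) (V_T N)"
proof -
  from assms obtain r x where "r \<noteq> x" "N = ({r, x}, {(r, x)})"
    by (auto simp: is_I_def)
  then have "V_T N \<subseteq> {x}"
    by (auto simp: V_T_def is_leaf_def is_tree_node_def indeg_def)
  then show ?thesis
    by (auto intro: inj_onI)
qed

lemma inj_on_profile_if_complete_reducible_seq:
  "binary_network N \<Longrightarrow> reducible_seq N S \<Longrightarrow> is_I (reduce_seq N S) \<Longrightarrow> inj_on (profile N) (V_T N)"
proof (induction S arbitrary: N)
  case Nil
  then show ?case
    by (simp add: inj_on_profile_I)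
next
  case (Cons s S)
  obtain V A where N: "N = (V, A)"
    by (cases N)
  obtain i j where s: "s = (i, j)"
    by (cases s)
  from Cons.prems have "is_cherry N i j \<or> is_ret_cherry N i j"
    by (simp add: reducible_def s)
  then have "binary_network (reduce N s)
      \<and> (inj_on (profile (reduce N s)) (V_T (reduce N s)) \<longrightarrow> inj_on (profile N) (V_T N))"
    using Cons.prems(1)
      cherry_reduction.binary_network_reduced[of V A i j] cherry_reduction.inj_on_profile_if_reduced[of V A i j]
      ret_cherry_reduction.binary_network_reduced[of V A i j] ret_cherry_reduction.inj_on_profile_if_reduced[of V A i j]
    by (auto simp: N s cherry_reduction_def ret_cherry_reduction_def)
  with Cons.IH[of "reduce N s"] Cons.prems show ?case
    by simp
qed

lemma profile_eq_if_mu_eq: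
  assumes "phylo_net n X N" "mu n X N u = mu n X N v"
  shows "profile N u = profile N v"
proof -
  have X: "leaves N = X" "X \<subseteq> {1..n}"
    using assms(1) by (auto simp: phylo_net_def leaves_def Let_def)
  have coordinates: "(if k = 0 then ret_paths N u else if k \<in> X then npaths (snd N) u k else 0)
      = (if k = 0 then ret_paths N v else if k \<in> X then npaths (snd N) v k else 0)" if "k \<le> n" for k
    using assms(2) that unfolding mu_def ret_paths_def map_eq_conv by (simp del: upt_Suc)
  show ?thesis
    unfolding profile_eq_iff
  proof (intro conjI ballI)
    show "ret_paths N u = ret_paths N v"
      using coordinates[of 0] by simp
  next
    fix x assume "x \<in> leaves N"
    with X have "x \<in> X" "x \<noteq> 0" "x \<le> n"
      by auto
    then show "npaths (snd N) u x = npaths (snd N) v x"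
      using coordinates[of x] by simp
  qed
qed

theorem mainTheorem8:
  assumes "orchard n X N"
  shows "(\<forall>u\<in>V_T N. \<forall>v\<in>V_T N. mu n X N u = mu n X N v \<longrightarrow> u = v)
         \<and> (\<forall>x. count (mu_rep n X N) x \<le> 1)"
proof -
  from assms obtain S where phylo: "phylo_net n X N"
    and "reducible_seq N S" "is_I (reduce_seq N S)"
    by (auto simp: orchard_def)
  then have inj_profile: "inj_on (profile N) (V_T N)"
    by (intro inj_on_profile_if_complete_reducible_seq binary_network_if_phylo_net)
  have inj: "inj_on (mu n X N) (V_T N)"
  proof (rule inj_onI)
    fix u v assume "u \<in> V_T N" "v \<in> V_T N" "mu n X N u = mu n X N v"
    then show "u = v"
      using inj_onD[OF inj_profile profile_eq_if_mu_eq[OF phylo]] by blast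
  qed
  then have "mu_rep n X N = mset_set (mu n X N ` V_T N)"
    unfolding mu_rep_def by (rule image_mset_mset_set)
  then have "count (mu_rep n X N) x \<le> 1" for x
    by (simp add: count_mset_set')
  with inj show ?thesis
    by (blast dest: inj_onD)
qed

end
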